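(* Let $n$ be a positive integer, let $s=4n^{3/5}$ and $t=n-2(n\log n)^{1/2}$ (rounded to integers as appropriate, with $s,t$ even). Given any family $\mathcal{A}\subset\mathcal{P}[n]$ there exist sets $S\subset T\subset[n]$ with $|S|=s$ and $|T|=t$, a maximal chain $\mathcal{C}=\{C_i:i\in[0,n]\}\subset\mathcal{P}[n]$ with $|C_i|=i$ for all $i$, and a set $I\subset[0,n]$ with the following properties. (i) $C_i\in\mathcal{A}$ for all $i\in I$. (ii) $\sum_{i\in I}\binom{n}{i}\ge|\mathcal{A}|-\frac{2^{10}}{n^{2/3}}2^n$. (iii) There is $F_0\in S^{(s/2)}$ such that $C_i\cap S=F_0$ for all $i\in I$ (and $i\ge s/2$ for $i\in I$). Furthermore, for each $i\in I$ there is a family $\mathcal{F}_i\subset S^{(s/2)}$ with $|\mathcal{F}_i|\ge\frac1n\binom{s}{s/2}$ such that $(C_i\setminus F_0)\cup F\in\mathcal{A}$ for all $F\in\mathcal{F}_i$. (iv) There is $D_0\in T^{(t/2)}$ such that $C_i\cap T=D_0$ for all $i\in I$ (and $i\ge t/2$ for $i\in I$). Furthermore, for each $i\in I$ there is a family $\mathcal{D}_i\subset T^{(t/2)}$ with $|\mathcal{D}_i|\ge\frac1n\binom{t}{t/2}$ such that $(C_i\setminus D_0)\cup D\in\mathcal{A}$ for all $D\in\mathcal{D}_i$. (v) For all $i\in I$, every element of $\mathcal{D}_i$ has at least $n^{4/3}$ neighbours in $\mathcal{D}_i$.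
   Context: $[n]=\{1,\ldots,n\}$, $[a,b]=\{a,a+1,\ldots,b\}$, $\mathcal{P}[n]$ is the power set of $[n]$, and for a set $X$, $X^{(k)}$ is the set of $k$-element subsets of $X$. Two sets $A_1,A_2\in T^{(t/2)}$ are neighbours if $|A_1\triangle A_2|=2$. $\log$ is the natural logarithm. Floors and ceilings are omitted where not crucial. *)

theory Defs
  imports Complex_Main
begin

text \<open>Rounding convention: s = 4 n^(3/5) and t = n - 2 (n log n)^(1/2),
  each rounded down to an even integer.\<close>
definition s_par :: "nat \<Rightarrow> nat" where
  "s_par n = 2 * nat \<lfloor>2 * real n powr (3/5)\<rfloor>"

definition t_par :: "nat \<Rightarrow> nat" where
  "t_par n = 2 * nat \<lfloor>(real n - 2 * sqrt (real n * ln (real n))) / 2\<rfloor>"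

definition neighbours :: "'a set \<Rightarrow> 'a set \<Rightarrow> bool" where
  "neighbours A B \<longleftrightarrow> card ((A - B) \<union> (B - A)) = 2"

definition max_chain :: "nat \<Rightarrow> (nat \<Rightarrow> nat set) \<Rightarrow> bool" where
  "max_chain n C \<longleftrightarrow> (\<forall>i\<le>n. C i \<subseteq> {1..n} \<and> card (C i) = i) \<and> (\<forall>i<n. C i \<subseteq> C (Suc i))"

end

theory Submission
  imports Defs "HOL-Probability.Hoeffding" "HOL-Combinatorics.Permutations" "HOL-Real_Asymp.Real_Asymp"
begin

text \<open>Take a uniformly random permutation \<open>\<sigma>\<close> of \<open>[n]\<close>, the chain \<open>C\<^sub>i = \<sigma>[1..i]\<close> and the
  blocks \<open>S = \<sigma>(first g \<union> last g)\<close>, \<open>T = \<sigma>(first h \<union> last h)\<close> with \<open>s = 2g\<close>, \<open>t = 2h\<close>.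
  For \<open>h \<le> i \<le> n - h\<close>, composing \<open>\<sigma>\<close> with a permutation \<open>\<kappa>\<close> of the block does not change the
  family of \<open>g\<close>-sets \<open>F \<subseteq> S\<close> with \<open>(C\<^sub>i - F\<^sub>0) \<union> F \<in> \<A>\<close>, while \<open>C\<^sub>i \<inter> S\<close> becomes a uniform
  \<open>g\<close>-subset of \<open>S\<close>. Hence \<open>C\<^sub>i \<in> \<A>\<close> with fewer than \<open>(s choose s/2)/n\<close> such completions has probability
  at most \<open>1/n\<close>; the same holds in \<open>T\<close> after replacing the completions by their subfamily of minimum
  degree \<open>d = n\<^bsup>4/3\<^esup>\<close> in the neighbour graph, which loses only \<open>O((d + h)/h\<^sup>2) (t choose t/2)\<close> sets by a
  Cauchy--Schwarz count over the \<open>(h-1)\<close>-subsets of a \<open>d\<close>-degenerate family. Weighting layer \<open>i\<close>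
  by \<open>n choose i\<close> and averaging over \<open>\<sigma>\<close> gives a good \<open>\<sigma>\<close>; the layers outside \<open>[h, n - h]\<close> carry
  at most \<open>2\<^sup>n \<cdot> 2/n\<^sup>2\<close> sets by Hoeffding's inequality.\<close>

section \<open>Dense subfamilies of the neighbour graph\<close>

lemma neighbours_sym: "neighbours A B \<Longrightarrow> neighbours B A"
  unfolding neighbours_def by (simp add: Un_commute)

lemma not_neighbours_self: "\<not> neighbours A A"
  unfolding neighbours_def by simp

lemma neighbours_iff_card_Int:
  assumes "finite D" "finite D'" "card D = k" "card D' = k" "D \<noteq> D'"
  shows "card (D \<inter> D') < k" and "neighbours D D' \<longleftrightarrow> card (D \<inter> D') = k - 1"
proof -
  have diff: "card (D - D') = k - card (D \<inter> D')" "card (D' - D) = k - card (D \<inter> D')"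
    using assms by (simp_all add: card_Diff_subset_Int Diff_Int Int_commute)
  have sym_diff: "card ((D - D') \<union> (D' - D)) = card (D - D') + card (D' - D)"
    using assms by (intro card_Un_disjoint) auto
  show lt: "card (D \<inter> D') < k"
  proof (rule ccontr)
    assume "\<not> card (D \<inter> D') < k"
    then have "D \<inter> D' = D" using assms by (metis card_seteq finite_Int inf_le1 not_less)
    then show False using assms by (metis card_subset_eq inf.absorb_iff1)
  qed
  show "neighbours D D' \<longleftrightarrow> card (D \<inter> D') = k - 1"
    using lt diff sym_diff unfolding neighbours_def by auto
qed

lemma card_filter_eq_sum: "finite A \<Longrightarrow> real (card {x\<in>A. P x}) = (\<Sum>x\<in>A. if P x then 1 else 0)"
  by (simp add: sum.If_cases Int_def)

text \<open>Peel off a vertex of degree \<open>< d\<close>: this lowers the degree sum by less than \<open>2d\<close>.\<close>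
lemma degree_sum_le_if_degenerate:
  fixes R :: "'a \<Rightarrow> 'a \<Rightarrow> bool" and d :: real
  assumes fin: "finite B" and sym: "\<And>x y. R x y \<Longrightarrow> R y x" and irrefl: "\<And>x. \<not> R x x"
    and degenerate: "\<And>C. C \<subseteq> B \<Longrightarrow> C \<noteq> {} \<Longrightarrow> \<exists>x\<in>C. real (card {y\<in>C. R x y}) < d"
  shows "(\<Sum>x\<in>B. real (card {y\<in>B. R x y})) \<le> 2 * d * real (card B)"
  using fin
proof (induction B rule: finite_remove_induct)
  case empty then show ?case by simp
next
  case (remove A)
  obtain v where v: "v \<in> A" "real (card {y\<in>A. R v y}) < d"
    using degenerate[OF remove(3) remove(2)] by blast
  have IH: "(\<Sum>x\<in>A-{v}. real (card {y\<in>A-{v}. R x y})) \<le> 2 * d * real (card (A-{v}))"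
    using remove(4)[OF v(1)] .
  have deg_split: "real (card {y\<in>A. R x y}) = real (card {y\<in>A-{v}. R x y}) + (if R x v then 1 else 0)"
    if "x \<in> A - {v}" for x
  proof -
    have "{y\<in>A. R x y} = {y\<in>A-{v}. R x y} \<union> (if R x v then {v} else {})"
      using that v(1) by auto
    then show ?thesis using remove(1) by (auto simp: card_insert_if)
  qed
  have back_edges: "(\<Sum>x\<in>A-{v}. (if R x v then 1 else 0::real)) = real (card {y\<in>A. R v y})"
  proof -
    have "{x\<in>A-{v}. R x v} = {y\<in>A. R v y}" using sym irrefl by auto
    then show ?thesis using card_filter_eq_sum[of "A-{v}" "\<lambda>x. R x v"] remove(1) by simp
  qed
  have "(\<Sum>x\<in>A. real (card {y\<in>A. R x y}))
      = real (card {y\<in>A. R v y}) + (\<Sum>x\<in>A-{v}. real (card {y\<in>A. R x y}))"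
    using remove(1) v(1) by (simp add: sum.remove)
  also have "(\<Sum>x\<in>A-{v}. real (card {y\<in>A. R x y}))
      = (\<Sum>x\<in>A-{v}. real (card {y\<in>A-{v}. R x y})) + real (card {y\<in>A. R v y})"
    by (simp add: deg_split sum.distrib back_edges)
  finally have "(\<Sum>x\<in>A. real (card {y\<in>A. R x y})) \<le> 2 * d + 2 * d * real (card (A-{v}))"
    using IH v(2) by linarith
  also have "\<dots> = 2 * d * real (card A)"
    using remove(1) v(1) card_Diff_singleton[of v A] card_gt_0_iff[of A]
    by (auto simp: algebra_simps of_nat_diff)
  finally show ?case .
qed

text \<open>Cauchy--Schwarz over the \<open>(k-1)\<close>-subsets \<open>W\<close> of \<open>T\<close>, where \<open>r(W)\<close> counts the members of \<open>B\<close>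
  containing \<open>W\<close>: \<open>\<Sum> r = k|B|\<close> and \<open>\<Sum> r\<^sup>2 = k|B| + \<Sum> deg\<close>, because two members of \<open>B\<close> share a
  \<open>(k-1)\<close>-subset iff they are equal or neighbours.\<close>
lemma card_mult_square_le_by_degree_sum:
  fixes d :: real
  assumes finT: "finite T" and k: "k \<ge> 1" and d0: "d \<ge> 0"
    and B: "B \<subseteq> {D. D \<subseteq> T \<and> card D = k}"
    and degree_sum: "(\<Sum>x\<in>B. real (card {y\<in>B. neighbours x y})) \<le> 2 * d * real (card B)"
  shows "real (card B) * real k ^ 2 \<le> real (card T choose (k - 1)) * (2 * d + real k)"
proof -
  define Ws where "Ws = {W. W \<subseteq> T \<and> card W = k - 1}"
  define r where "r W = real (card {D\<in>B. W \<subseteq> D})" for W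
  have finB: "finite B" using B finT by (auto intro: finite_subset[of _ "Pow T"])
  have finWs: "finite Ws" unfolding Ws_def using finT by simp
  have cardWs: "card Ws = card T choose (k - 1)" unfolding Ws_def using n_subsets[OF finT] .
  have finD: "finite D" if "D \<in> B" for D using that B finT by (auto intro: finite_subset)
  have k_choose: "k choose (k - 1) = k" using binomial_symmetric[of "k-1" k] k by simp
  have common: "real (card {W\<in>Ws. W \<subseteq> D \<and> W \<subseteq> D'}) = real (card (D \<inter> D') choose (k - 1))"
    if "D \<in> B" for D D'
  proof -
    have "{W\<in>Ws. W \<subseteq> D \<and> W \<subseteq> D'} = {W. W \<subseteq> D \<inter> D' \<and> card W = k - 1}"
      using that B unfolding Ws_def by auto
    then show ?thesis using n_subsets[of "D \<inter> D'" "k - 1"] finD[OF that] by simp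
  qed
  have sum_r: "(\<Sum>W\<in>Ws. r W) = real (card B) * real k"
  proof -
    have "(\<Sum>W\<in>Ws. r W) = (\<Sum>D\<in>B. \<Sum>W\<in>Ws. if W \<subseteq> D then 1 else 0)"
      unfolding r_def using finB by (simp add: card_filter_eq_sum sum.swap[of _ Ws])
    also have "\<dots> = (\<Sum>D\<in>B. real k)"
    proof (rule sum.cong[OF refl])
      fix D assume D: "D \<in> B"
      have "(\<Sum>W\<in>Ws. if W \<subseteq> D then 1 else 0) = real (card (D \<inter> D) choose (k - 1))"
        using common[OF D, of D] finWs by (simp add: card_filter_eq_sum)
      then show "(\<Sum>W\<in>Ws. if W \<subseteq> D then 1 else 0) = real k" using D B k_choose by auto
    qed
    finally show ?thesis by simp
  qed
  have pair_count: "(\<Sum>W\<in>Ws. if W \<subseteq> D \<and> W \<subseteq> D' then 1 else 0)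
      = (if D' = D then real k else if neighbours D D' then 1 else 0)" if "D \<in> B" "D' \<in> B" for D D'
  proof -
    have "(\<Sum>W\<in>Ws. if W \<subseteq> D \<and> W \<subseteq> D' then 1 else 0) = real (card (D \<inter> D') choose (k - 1))"
      using common[OF that(1)] finWs by (simp add: card_filter_eq_sum)
    moreover have "real (card (D \<inter> D') choose (k - 1)) = (if neighbours D D' then 1 else 0)" if "D' \<noteq> D"
    proof -
      have "card D = k" "card D' = k" using \<open>D \<in> B\<close> \<open>D' \<in> B\<close> B by auto
      note inter = neighbours_iff_card_Int[OF finD[OF \<open>D \<in> B\<close>] finD[OF \<open>D' \<in> B\<close>] this]
      show ?thesis
      proof (cases "neighbours D D'")
        case False
        then have "card (D \<inter> D') < k - 1" using inter \<open>D' \<noteq> D\<close> by auto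
        then show ?thesis using False by (simp add: binomial_eq_0)
      qed (use inter \<open>D' \<noteq> D\<close> in auto)
    qed
    ultimately show ?thesis using that B k_choose by auto
  qed
  have sum_r_sq: "(\<Sum>W\<in>Ws. (r W)^2) = real (card B) * real k + (\<Sum>x\<in>B. real (card {y\<in>B. neighbours x y}))"
  proof -
    have "(r W)^2 = (\<Sum>D\<in>B. \<Sum>D'\<in>B. if W \<subseteq> D \<and> W \<subseteq> D' then 1 else 0)" for W
      unfolding r_def power2_eq_square card_filter_eq_sum[OF finB] sum_product
      by (intro sum.cong refl) auto
    then have "(\<Sum>W\<in>Ws. (r W)^2) = (\<Sum>D\<in>B. \<Sum>D'\<in>B. \<Sum>W\<in>Ws. if W \<subseteq> D \<and> W \<subseteq> D' then 1 else 0)"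
      by (simp add: sum.swap[of _ Ws])
    also have "\<dots> = (\<Sum>D\<in>B. \<Sum>D'\<in>B. (if D' = D then real k else 0) + (if neighbours D D' then 1 else 0))"
      using pair_count not_neighbours_self by (intro sum.cong refl) auto
    also have "\<dots> = (\<Sum>D\<in>B. real k + real (card {y\<in>B. neighbours D y}))"
      using finB by (simp add: sum.distrib card_filter_eq_sum)
    finally show ?thesis by (simp add: sum.distrib)
  qed
  have "(real (card B) * real k)^2 \<le> (real (card B) * real k + 2 * d * real (card B)) * real (card Ws)"
    using sum_squared_le_sum_of_squares[of r Ws] sum_r sum_r_sq degree_sum
    by (smt (verit, best) mult_right_mono of_nat_0_le_iff)
  then have "real (card B) * (real (card B) * real k ^ 2) \<le> real (card B) * (real (card Ws) * (2 * d + real k))"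
    by (simp add: power2_eq_square algebra_simps)
  then show ?thesis using cardWs d0 by (cases "card B = 0") (auto simp: mult_le_cancel_left_pos)
qed

text \<open>A union of subfamilies of minimum degree \<open>\<ge> d\<close> again has minimum degree \<open>\<ge> d\<close>, so this is
  the largest such subfamily of \<open>\<B>\<close>.\<close>
definition core :: "real \<Rightarrow> 'a set set \<Rightarrow> 'a set set" where
  "core d \<B> = \<Union>{\<D>. \<D> \<subseteq> \<B> \<and> (\<forall>D\<in>\<D>. real (card {D'\<in>\<D>. neighbours D D'}) \<ge> d)}"

lemma core_subset: "core d \<B> \<subseteq> \<B>"
  unfolding core_def by blast

lemma core_min_degree:
  assumes "finite \<B>" and "D \<in> core d \<B>"
  shows "real (card {D'\<in>core d \<B>. neighbours D D'}) \<ge> d"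
proof -
  obtain \<D> where \<D>: "\<D> \<subseteq> \<B>" "\<forall>D\<in>\<D>. real (card {D'\<in>\<D>. neighbours D D'}) \<ge> d" "D \<in> \<D>"
    using assms(2) unfolding core_def by blast
  have "\<D> \<subseteq> core d \<B>" using \<D> unfolding core_def by blast
  moreover have "finite (core d \<B>)" using assms(1) core_subset finite_subset by metis
  ultimately have "card {D'\<in>\<D>. neighbours D D'} \<le> card {D'\<in>core d \<B>. neighbours D D'}"
    by (intro card_mono) auto
  then show ?thesis using \<D>(2,3) by (meson of_nat_le_iff order_trans)
qed

lemma card_le_card_core:
  fixes d :: real
  assumes finT: "finite T" and k: "k \<ge> 1" and d0: "d \<ge> 0" and B: "\<B> \<subseteq> {D. D \<subseteq> T \<and> card D = k}"
  shows "real (card \<B>) \<le> real (card (core d \<B>)) + real (card T choose (k - 1)) * (2 * d + real k) / real k ^ 2"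
proof -
  define R where "R = \<B> - core d \<B>"
  have finB: "finite \<B>" using B finT by (auto intro: finite_subset[of _ "Pow T"])
  have degenerate: "\<exists>x\<in>C. real (card {y\<in>C. neighbours x y}) < d" if "C \<subseteq> R" "C \<noteq> {}" for C
  proof (rule ccontr)
    assume "\<not> ?thesis"
    then have "\<forall>x\<in>C. real (card {y\<in>C. neighbours x y}) \<ge> d" by (auto simp: not_less)
    moreover have "C \<subseteq> \<B>" using that unfolding R_def by blast
    ultimately have "C \<subseteq> core d \<B>" unfolding core_def by blast
    then show False using that unfolding R_def by blast
  qed
  have "(\<Sum>x\<in>R. real (card {y\<in>R. neighbours x y})) \<le> 2 * d * real (card R)"
    using finB unfolding R_def
    by (intro degree_sum_le_if_degenerate) (auto intro: neighbours_sym simp: not_neighbours_self degenerate[unfolded R_def])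
  then have "real (card R) * real k ^ 2 \<le> real (card T choose (k - 1)) * (2 * d + real k)"
    using B by (intro card_mult_square_le_by_degree_sum[OF finT k d0]) (auto simp: R_def)
  then have "real (card R) \<le> real (card T choose (k - 1)) * (2 * d + real k) / real k ^ 2"
    using k by (simp add: field_simps)
  moreover have "card \<B> = card (core d \<B>) + card R"
    unfolding R_def using finB core_subset[of d \<B>] by (metis card_Diff_subset finite_subset le_add_diff_inverse card_mono)
  ultimately show ?thesis by simp
qed

section \<open>Counting permutations by the image of a fixed set\<close>

lemma exists_permutes_image_eq:
  assumes P: "finite P" and X: "X \<subseteq> P" and Y: "Y \<subseteq> P" and c: "card X = card Y"
  shows "\<exists>\<pi>. \<pi> permutes P \<and> \<pi> ` X = Y"
proof -
  have fin: "finite X" "finite Y" using P X Y finite_subset by auto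
  obtain f where f: "bij_betw f X Y" using finite_same_card_bij[OF fin c] by blast
  have "card (P - X) = card (P - Y)" using c X Y P fin by (simp add: card_Diff_subset)
  then obtain g where g: "bij_betw g (P - X) (P - Y)" using finite_same_card_bij P by (meson finite_Diff)
  define \<pi> where "\<pi> x = (if x \<in> X then f x else if x \<in> P then g x else x)" for x
  have on_X: "bij_betw \<pi> X Y" using f by (rule bij_betw_cong[THEN iffD1, rotated]) (simp add: \<pi>_def)
  have "bij_betw \<pi> (P - X) (P - Y)" using g by (rule bij_betw_cong[THEN iffD1, rotated]) (simp add: \<pi>_def)
  then have "bij_betw \<pi> (X \<union> (P - X)) (Y \<union> (P - Y))" by (rule bij_betw_combine[OF on_X]) auto
  then have "bij_betw \<pi> P P" using X Y by (simp add: Un_Diff_cancel Un_absorb1)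
  then have "\<pi> permutes P" by (rule bij_imp_permutes) (auto simp: \<pi>_def dest: subsetD[OF X])
  moreover have "\<pi> ` X = Y" using on_X by (simp add: bij_betw_def)
  ultimately show ?thesis by blast
qed

lemma card_permutes_image_eq_cong:
  assumes P: "finite P" and X: "X \<subseteq> P" and Y: "Y \<subseteq> P" and c: "card X = card Y"
  shows "card {\<kappa>. \<kappa> permutes P \<and> \<kappa> ` Q = X} = card {\<kappa>. \<kappa> permutes P \<and> \<kappa> ` Q = Y}"
proof -
  have le: "card {\<kappa>. \<kappa> permutes P \<and> \<kappa> ` Q = X} \<le> card {\<kappa>. \<kappa> permutes P \<and> \<kappa> ` Q = Y}"
    if X: "X \<subseteq> P" and Y: "Y \<subseteq> P" and c: "card X = card Y" for X Y
  proof -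
    obtain \<pi> where \<pi>: "\<pi> permutes P" "\<pi> ` X = Y" using exists_permutes_image_eq[OF P X Y c] by blast
    have "inj_on (\<lambda>\<kappa>. \<pi> \<circ> \<kappa>) {\<kappa>. \<kappa> permutes P \<and> \<kappa> ` Q = X}"
    proof (rule inj_onI)
      fix a b assume "\<pi> \<circ> a = \<pi> \<circ> b"
      then show "a = b" using permutes_inj[OF \<pi>(1)] by (auto simp: fun_eq_iff inj_def)
    qed
    moreover have "(\<lambda>\<kappa>. \<pi> \<circ> \<kappa>) ` {\<kappa>. \<kappa> permutes P \<and> \<kappa> ` Q = X} \<subseteq> {\<kappa>. \<kappa> permutes P \<and> \<kappa> ` Q = Y}"
    proof
      fix \<rho> assume "\<rho> \<in> (\<lambda>\<kappa>. \<pi> \<circ> \<kappa>) ` {\<kappa>. \<kappa> permutes P \<and> \<kappa> ` Q = X}"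
      then obtain \<kappa> where "\<kappa> permutes P" "\<kappa> ` Q = X" "\<rho> = \<pi> \<circ> \<kappa>" by blast
      then show "\<rho> \<in> {\<kappa>. \<kappa> permutes P \<and> \<kappa> ` Q = Y}"
        using \<pi> permutes_compose[of \<kappa> P \<pi>] image_comp[of \<pi> \<kappa> Q] by simp
    qed
    moreover have "finite {\<kappa>. \<kappa> permutes P \<and> \<kappa> ` Q = Y}"
      by (rule finite_subset[OF _ finite_permutations[OF P]]) blast
    ultimately show ?thesis by (simp add: card_mono flip: card_image)
  qed
  show ?thesis using le[OF X Y c] le[OF Y X c[symmetric]] by (rule antisym)
qed

lemma card_permutes_image_in:
  assumes P: "finite P" and Q: "Q \<subseteq> P" and B: "\<B> \<subseteq> {X. X \<subseteq> P \<and> card X = card Q}"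
  shows "card {\<kappa>. \<kappa> permutes P \<and> \<kappa> ` Q \<in> \<B>} * (card P choose card Q) = card \<B> * fact (card P)"
proof -
  have count: "card {\<kappa>. \<kappa> permutes P \<and> \<kappa> ` Q \<in> \<B>} = card \<B> * card {\<kappa>. \<kappa> permutes P \<and> \<kappa> ` Q = Q}"
    if B: "\<B> \<subseteq> {X. X \<subseteq> P \<and> card X = card Q}" for \<B>
  proof -
    have finB: "finite \<B>" using B P by (auto intro: finite_subset[of _ "Pow P"])
    have "{\<kappa>. \<kappa> permutes P \<and> \<kappa> ` Q \<in> \<B>} = (\<Union>X\<in>\<B>. {\<kappa>. \<kappa> permutes P \<and> \<kappa> ` Q = X})" by auto
    also have "card \<dots> = (\<Sum>X\<in>\<B>. card {\<kappa>. \<kappa> permutes P \<and> \<kappa> ` Q = X})"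
      by (intro card_UN_disjoint finB ballI finite_subset[OF _ finite_permutations[OF P]]) auto
    also have "\<dots> = (\<Sum>X\<in>\<B>. card {\<kappa>. \<kappa> permutes P \<and> \<kappa> ` Q = Q})"
      by (intro sum.cong refl card_permutes_image_eq_cong[OF P _ Q]) (use B in auto)
    finally show ?thesis by simp
  qed
  let ?all = "{X. X \<subseteq> P \<and> card X = card Q}"
  have "{\<kappa>. \<kappa> permutes P \<and> \<kappa> ` Q \<in> ?all} = {\<kappa>. \<kappa> permutes P}"
    using Q by (auto dest: permutes_image permutes_inj intro: card_image inj_on_subset)
  then have "fact (card P) = (card P choose card Q) * card {\<kappa>. \<kappa> permutes P \<and> \<kappa> ` Q = Q}"
    using count[of ?all] card_permutations[OF refl P] n_subsets[OF P] by simp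
  then show ?thesis using count[OF B] by (simp add: algebra_simps)
qed

lemma card_permutes_image_image_in:
  assumes P: "finite P" and Q: "Q \<subseteq> P" and inj: "inj_on \<sigma> P"
    and B: "\<B> \<subseteq> {X. X \<subseteq> \<sigma> ` P \<and> card X = card Q}"
  shows "card {\<kappa>. \<kappa> permutes P \<and> \<sigma> ` (\<kappa> ` Q) \<in> \<B>} * (card P choose card Q) = card \<B> * fact (card P)"
proof -
  define B' where "B' = {X. X \<subseteq> P \<and> card X = card Q \<and> \<sigma> ` X \<in> \<B>}"
  have "{\<kappa>. \<kappa> permutes P \<and> \<sigma> ` (\<kappa> ` Q) \<in> \<B>} = {\<kappa>. \<kappa> permutes P \<and> \<kappa> ` Q \<in> B'}"
    using Q unfolding B'_def by (auto dest: permutes_image permutes_inj intro: card_image inj_on_subset)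
  moreover have "bij_betw (image \<sigma>) B' \<B>"
  proof (rule bij_betw_imageI)
    show "inj_on ((`) \<sigma>) B'" using inj_on_image_Pow[OF inj] by (rule inj_on_subset) (auto simp: B'_def)
    show "(`) \<sigma> ` B' = \<B>"
    proof (intro set_eqI iffI)
      fix X assume "X \<in> \<B>"
      then have X: "X \<subseteq> \<sigma> ` P" "card X = card Q" using B by auto
      obtain Z where Z: "Z \<subseteq> P" "X = \<sigma> ` Z" using X(1) by (auto simp: subset_image_iff)
      have "card Z = card Q" using X(2) Z card_image[OF inj_on_subset[OF inj Z(1)]] by simp
      then show "X \<in> (`) \<sigma> ` B'" using Z \<open>X \<in> \<B>\<close> unfolding B'_def by blast
    qed (auto simp: B'_def)
  qed
  then have "card B' = card \<B>" by (rule bij_betw_same_card)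
  moreover have "card {\<kappa>. \<kappa> permutes P \<and> \<kappa> ` Q \<in> B'} * (card P choose card Q) = card B' * fact (card P)"
    by (rule card_permutes_image_in[OF P Q]) (auto simp: B'_def)
  ultimately show ?thesis by simp
qed

lemma bij_betw_comp_permutes:
  assumes "\<kappa> permutes S"
  shows "bij_betw (\<lambda>\<sigma>. \<sigma> \<circ> \<kappa>) {\<sigma>. \<sigma> permutes S} {\<sigma>. \<sigma> permutes S}"
  by (rule bij_betw_byWitness[where f'="\<lambda>\<sigma>. \<sigma> \<circ> inv \<kappa>"])
    (use assms permutes_inv[OF assms] permutes_inv_o[OF assms] in \<open>auto simp: comp_assoc intro: permutes_compose\<close>)

text \<open>Double counting over the orbits of a set \<open>K\<close> acting on \<open>G\<close> from the right: if every orbit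
  contains at most a \<open>\<beta>\<close>-fraction of bad points, so does \<open>G\<close>.\<close>
lemma card_filter_le_by_orbits:
  fixes G K :: "('a \<Rightarrow> 'a) set" and \<beta> :: real
  assumes finG: "finite G" and finK: "finite K" and Kne: "K \<noteq> {}"
    and bij: "\<And>\<kappa>. \<kappa> \<in> K \<Longrightarrow> bij_betw (\<lambda>\<sigma>. \<sigma> \<circ> \<kappa>) G G"
    and orbit: "\<And>\<sigma>. \<sigma> \<in> G \<Longrightarrow> real (card {\<kappa>\<in>K. bad (\<sigma> \<circ> \<kappa>)}) \<le> \<beta> * real (card K)"
  shows "real (card {\<sigma>\<in>G. bad \<sigma>}) \<le> \<beta> * real (card G)"
proof -
  have shift: "card {\<sigma>\<in>G. bad (\<sigma> \<circ> \<kappa>)} = card {\<sigma>\<in>G. bad \<sigma>}" if "\<kappa> \<in> K" for \<kappa>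
  proof -
    have "bij_betw (\<lambda>\<sigma>. \<sigma> \<circ> \<kappa>) {\<sigma>\<in>G. bad (\<sigma> \<circ> \<kappa>)} {\<sigma>\<in>G. bad \<sigma>}"
      using bij[OF that] unfolding bij_betw_def inj_on_def by auto
    then show ?thesis by (rule bij_betw_same_card)
  qed
  have "real (card K) * real (card {\<sigma>\<in>G. bad \<sigma>}) = (\<Sum>\<kappa>\<in>K. real (card {\<sigma>\<in>G. bad (\<sigma> \<circ> \<kappa>)}))"
    by (simp add: shift)
  also have "\<dots> = (\<Sum>\<sigma>\<in>G. real (card {\<kappa>\<in>K. bad (\<sigma> \<circ> \<kappa>)}))"
    using finG finK by (simp add: card_filter_eq_sum sum.swap[of _ K])
  also have "\<dots> \<le> (\<Sum>\<sigma>\<in>G. \<beta> * real (card K))" by (rule sum_mono) (rule orbit)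
  finally show ?thesis using Kne finK by (simp add: card_gt_0_iff mult.commute mult_le_cancel_left_pos)
qed

section \<open>Random chains through a block\<close>

text \<open>The chain is \<open>C\<^sub>i = \<sigma>{1..i}\<close> and the block is \<open>\<sigma>(outer_block n k)\<close>. For \<open>k \<le> i \<le> n - k\<close> the
  chain meets the block in \<open>\<sigma>{1..k}\<close>, and \<open>completions\<close> collects the \<open>k\<close>-subsets \<open>F\<close> of the block
  with \<open>(C\<^sub>i - \<sigma>{1..k}) \<union> F \<in> \<A>\<close>.\<close>
definition outer_block :: "nat \<Rightarrow> nat \<Rightarrow> nat set" where
  "outer_block n k = {1..k} \<union> {n-k<..n}"

definition completions :: "nat set set \<Rightarrow> (nat \<Rightarrow> nat) \<Rightarrow> nat \<Rightarrow> nat \<Rightarrow> nat \<Rightarrow> nat set set" where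
  "completions \<A> \<sigma> n k i = {F. F \<subseteq> \<sigma> ` outer_block n k \<and> card F = k \<and> \<sigma> ` {Suc k..i} \<union> F \<in> \<A>}"

lemma finite_outer_block [simp]: "finite (outer_block n k)"
  unfolding outer_block_def by simp

lemma outer_block_subset: "k \<le> n \<Longrightarrow> outer_block n k \<subseteq> {1..n}"
  unfolding outer_block_def by auto

lemma outer_block_mono: "k \<le> h \<Longrightarrow> h \<le> n \<Longrightarrow> outer_block n k \<subseteq> outer_block n h"
  unfolding outer_block_def by auto

lemma card_outer_block: "2 * k \<le> n \<Longrightarrow> card (outer_block n k) = 2 * k"
  unfolding outer_block_def by (subst card_Un_disjoint) auto

lemma Int_outer_block: "k \<le> i \<Longrightarrow> i \<le> n - k \<Longrightarrow> {1..i} \<inter> outer_block n k = {1..k}"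
  unfolding outer_block_def by auto

lemma disjoint_outer_block: "k \<le> i \<Longrightarrow> i \<le> n - k \<Longrightarrow> {Suc k..i} \<inter> outer_block n k = {}"
  unfolding outer_block_def by auto

lemma finite_completions: "finite (completions \<A> \<sigma> n k i)"
  unfolding completions_def by (auto intro: finite_subset[of _ "Pow (\<sigma> ` outer_block n k)"])

lemma permutes_image_disjoint: "\<kappa> permutes P \<Longrightarrow> X \<inter> P = {} \<Longrightarrow> \<kappa> ` X = X"
  using permutes_not_in[of \<kappa> P] by (force simp: image_iff)

lemma completions_comp_permutes:
  assumes "\<kappa> permutes outer_block n k" "k \<le> i" "i \<le> n - k"
  shows "completions \<A> (\<sigma> \<circ> \<kappa>) n k i = completions \<A> \<sigma> n k i"
proof -
  have comp: "(\<sigma> \<circ> \<kappa>) ` X = \<sigma> ` (\<kappa> ` X)" for X by auto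
  have "(\<sigma> \<circ> \<kappa>) ` outer_block n k = \<sigma> ` outer_block n k"
    using permutes_image[OF assms(1)] by (simp only: comp)
  moreover have "(\<sigma> \<circ> \<kappa>) ` {Suc k..i} = \<sigma> ` {Suc k..i}"
    using permutes_image_disjoint[OF assms(1) disjoint_outer_block[OF assms(2,3)]] by (simp only: comp)
  ultimately show ?thesis unfolding completions_def by simp
qed

lemma chain_comp_permutes:
  assumes "\<kappa> permutes outer_block n k" "k \<le> i" "i \<le> n - k"
  shows "(\<sigma> \<circ> \<kappa>) ` {1..i} = \<sigma> ` {Suc k..i} \<union> \<sigma> ` (\<kappa> ` {1..k})"
proof -
  have "{1..i} = {Suc k..i} \<union> {1..k}" using assms by auto
  then have "(\<sigma> \<circ> \<kappa>) ` {1..i} = \<sigma> ` (\<kappa> ` {Suc k..i}) \<union> \<sigma> ` (\<kappa> ` {1..k})"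
    by (simp only: image_Un image_comp)
  then show ?thesis
    using permutes_image_disjoint[OF assms(1) disjoint_outer_block[OF assms(2,3)]] by simp
qed

text \<open>Along the orbit of \<open>\<sigma>\<close> under the permutations of the block, the completion family is constant
  while \<open>C\<^sub>i \<in> \<A>\<close> says precisely that the image of \<open>{1..k}\<close> is one of the completions.\<close>
lemma card_block_orbit_chain_in_le:
  assumes \<sigma>: "\<sigma> permutes {1..n}" and k: "2 * k \<le> n" and i: "k \<le> i" "i \<le> n - k"
  shows "real (card {\<kappa>. \<kappa> permutes outer_block n k \<and> (\<sigma> \<circ> \<kappa>) ` {1..i} \<in> \<A> \<and>
                      \<Phi> (completions \<A> (\<sigma> \<circ> \<kappa>) n k i)}) * real (2 * k choose k)
         \<le> (if \<Phi> (completions \<A> \<sigma> n k i) then real (card (completions \<A> \<sigma> n k i)) * fact (2 * k) else 0)"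
    (is "real (card ?K) * _ \<le> _")
proof (cases "\<Phi> (completions \<A> \<sigma> n k i)")
  case False
  have "\<Phi> (completions \<A> (\<sigma> \<circ> \<kappa>) n k i) = \<Phi> (completions \<A> \<sigma> n k i)"
    if "\<kappa> permutes outer_block n k" for \<kappa>
    using completions_comp_permutes[OF that i] by (rule arg_cong)
  then have "?K = {}" using False by blast
  then show ?thesis by (simp only: card.empty of_nat_0 mult_zero_left if_not_P[OF False] order_refl)
next
  case True
  let ?F = "completions \<A> \<sigma> n k i"
  let ?M = "{\<kappa>. \<kappa> permutes outer_block n k \<and> \<sigma> ` (\<kappa> ` {1..k}) \<in> ?F}"
  have inj: "inj_on \<sigma> (outer_block n k)" using permutes_inj[OF \<sigma>] by (rule inj_on_subset) simp
  have "?K \<subseteq> ?M"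
  proof
    fix \<kappa> assume "\<kappa> \<in> ?K"
    then have \<kappa>: "\<kappa> permutes outer_block n k" "(\<sigma> \<circ> \<kappa>) ` {1..i} \<in> \<A>" by auto
    have sub: "\<kappa> ` {1..k} \<subseteq> outer_block n k" using permutes_image[OF \<kappa>(1)] unfolding outer_block_def by blast
    have "card (\<sigma> ` (\<kappa> ` {1..k})) = k"
      using permutes_inj[OF \<kappa>(1)] card_image[OF inj_on_subset[OF inj sub]]
      by (simp add: card_image inj_on_subset)
    moreover have "\<sigma> ` (\<kappa> ` {1..k}) \<subseteq> \<sigma> ` outer_block n k" using sub by blast
    moreover have "\<sigma> ` {Suc k..i} \<union> \<sigma> ` (\<kappa> ` {1..k}) \<in> \<A>"
      using \<kappa>(2) chain_comp_permutes[OF \<kappa>(1) i, of \<sigma>] by simp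
    ultimately show "\<kappa> \<in> ?M" using \<kappa>(1) unfolding completions_def by simp
  qed
  then have KM: "card ?K \<le> card ?M"
    by (intro card_mono finite_subset[OF _ finite_permutations[of "outer_block n k"]]) auto
  have M: "card ?M * (2 * k choose k) = card ?F * fact (2 * k)"
  proof -
    have "card ?M * (card (outer_block n k) choose card {1..k}) = card ?F * fact (card (outer_block n k))"
    proof (rule card_permutes_image_image_in[OF finite_outer_block _ inj])
      show "{1..k} \<subseteq> outer_block n k" unfolding outer_block_def by (rule Un_upper1)
      show "?F \<subseteq> {X. X \<subseteq> \<sigma> ` outer_block n k \<and> card X = card {1..k}}"
        unfolding completions_def by auto
    qed
    then show ?thesis unfolding card_outer_block[OF k] by simp
  qed
  have "card ?K * (2 * k choose k) \<le> card ?F * fact (2 * k)"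
    using mult_le_mono1[OF KM, of "2 * k choose k"] unfolding M .
  then have "real (card ?K * (2 * k choose k)) \<le> real (card ?F * fact (2 * k))"
    by (simp only: of_nat_le_iff)
  then have "real (card ?K) * real (2 * k choose k) \<le> real (card ?F) * fact (2 * k)"
    by (simp only: of_nat_mult of_nat_fact)
  then show ?thesis using True by simp
qed

lemma card_chain_in_le:
  fixes \<beta> :: real
  assumes k: "2 * k \<le> n" and i: "k \<le> i" "i \<le> n - k" and \<beta>: "\<beta> \<ge> 0"
    and small: "\<And>\<sigma>. \<sigma> permutes {1..n} \<Longrightarrow> \<Phi> (completions \<A> \<sigma> n k i) \<Longrightarrow>
                 real (card (completions \<A> \<sigma> n k i)) \<le> \<beta> * real (2 * k choose k)"
  shows "real (card {\<sigma>. \<sigma> permutes {1..n} \<and> \<sigma> ` {1..i} \<in> \<A> \<and> \<Phi> (completions \<A> \<sigma> n k i)})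
          \<le> \<beta> * fact n"
proof -
  let ?K = "{\<kappa>. \<kappa> permutes outer_block n k}"
  have "real (card {\<sigma>\<in>{\<sigma>. \<sigma> permutes {1..n}}. \<sigma> ` {1..i} \<in> \<A> \<and> \<Phi> (completions \<A> \<sigma> n k i)})
          \<le> \<beta> * real (card {\<sigma>. \<sigma> permutes {1..n}})"
  proof (rule card_filter_le_by_orbits)
    show "finite {\<sigma>. \<sigma> permutes {1..n}}" "finite ?K" by (simp_all add: finite_permutations)
    show "?K \<noteq> {}" using permutes_id by blast
    show "bij_betw (\<lambda>\<sigma>. \<sigma> \<circ> \<kappa>) {\<sigma>. \<sigma> permutes {1..n}} {\<sigma>. \<sigma> permutes {1..n}}" if "\<kappa> \<in> ?K" for \<kappa>
      using that outer_block_subset[of k n] k by (intro bij_betw_comp_permutes) (auto intro: permutes_subset)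
    fix \<sigma> assume \<sigma>: "\<sigma> \<in> {\<sigma>. \<sigma> permutes {1..n}}"
    have "real (card {\<kappa>\<in>?K. (\<sigma> \<circ> \<kappa>) ` {1..i} \<in> \<A> \<and> \<Phi> (completions \<A> (\<sigma> \<circ> \<kappa>) n k i)})
            * real (2 * k choose k)
         \<le> (if \<Phi> (completions \<A> \<sigma> n k i) then real (card (completions \<A> \<sigma> n k i)) * fact (2 * k) else 0)"
      using card_block_orbit_chain_in_le[of \<sigma> n k i \<A> \<Phi>] \<sigma> k i by simp
    also have "\<dots> \<le> (\<beta> * fact (2 * k)) * real (2 * k choose k)"
      using small[of \<sigma>] \<sigma> \<beta> by (auto simp: mult_ac intro: mult_right_mono)
    finally show "real (card {\<kappa>\<in>?K. (\<sigma> \<circ> \<kappa>) ` {1..i} \<in> \<A> \<and> \<Phi> (completions \<A> (\<sigma> \<circ> \<kappa>) n k i)})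
           \<le> \<beta> * real (card ?K)"
      using card_permutations[OF card_outer_block[OF k]] by (simp add: mult_le_cancel_right_pos)
  qed
  then show ?thesis using card_permutations[of "{1..n}" n] by simp
qed

lemma card_permutes_chain_in:
  assumes A: "\<A> \<subseteq> Pow {1..n}" and i: "i \<le> n"
  shows "real (card {\<sigma>. \<sigma> permutes {1..n} \<and> \<sigma> ` {1..i} \<in> \<A>}) * real (n choose i)
         = real (card {X\<in>\<A>. card X = i}) * fact n"
proof -
  have "card {\<sigma>. \<sigma> permutes {1..n} \<and> id ` (\<sigma> ` {1..i}) \<in> {X\<in>\<A>. card X = i}} * (card {1..n} choose card {1..i})
        = card {X\<in>\<A>. card X = i} * fact (card {1..n})"
    by (rule card_permutes_image_image_in) (use A i in auto)
  moreover have "{\<sigma>. \<sigma> permutes {1..n} \<and> id ` (\<sigma> ` {1..i}) \<in> {X\<in>\<A>. card X = i}}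
      = {\<sigma>. \<sigma> permutes {1..n} \<and> \<sigma> ` {1..i} \<in> \<A>}"
  proof (intro Collect_cong conj_cong refl)
    fix \<sigma> assume "\<sigma> permutes {1..n}"
    have "card (\<sigma> ` {1..i}) = i"
      using permutes_inj[OF \<open>\<sigma> permutes {1..n}\<close>] by (simp add: card_image inj_on_subset)
    then show "id ` (\<sigma> ` {1..i}) \<in> {X\<in>\<A>. card X = i} \<longleftrightarrow> \<sigma> ` {1..i} \<in> \<A>" by simp
  qed
  ultimately have "card {\<sigma>. \<sigma> permutes {1..n} \<and> \<sigma> ` {1..i} \<in> \<A>} * (n choose i) = card {X\<in>\<A>. card X = i} * fact n"
    by simp
  then have "real (card {\<sigma>. \<sigma> permutes {1..n} \<and> \<sigma> ` {1..i} \<in> \<A>} * (n choose i))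
      = real (card {X\<in>\<A>. card X = i} * fact n)"
    by (simp only:)
  then show ?thesis by (simp only: of_nat_mult of_nat_fact)
qed

section \<open>A permutation whose chain is good on most levels\<close>

definition good_level :: "nat set set \<Rightarrow> nat \<Rightarrow> nat \<Rightarrow> nat \<Rightarrow> real \<Rightarrow> (nat \<Rightarrow> nat) \<Rightarrow> nat \<Rightarrow> bool" where
  "good_level \<A> n g h d \<sigma> i \<longleftrightarrow> \<sigma> ` {1..i} \<in> \<A> \<and>
     1 / real n * real (2 * g choose g) \<le> real (card (completions \<A> \<sigma> n g i)) \<and>
     1 / real n * real (2 * h choose h) \<le> real (card (core d (completions \<A> \<sigma> n h i)))"

lemma card_chain_in_le_good_level:
  assumes gh: "g \<le> h" and h1: "1 \<le> h" and hn: "2 * h \<le> n" and d0: "d \<ge> 0"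
    and i: "h \<le> i" "i \<le> n - h"
  shows "real (card {\<sigma>. \<sigma> permutes {1..n} \<and> \<sigma> ` {1..i} \<in> \<A>})
     \<le> real (card {\<sigma>. \<sigma> permutes {1..n} \<and> good_level \<A> n g h d \<sigma> i})
       + (2 / real n + (2 * d + real h) / real h ^ 2) * fact n"
proof -
  define bad_S where "bad_S = {\<sigma>. \<sigma> permutes {1..n} \<and> \<sigma> ` {1..i} \<in> \<A> \<and>
    real (card (completions \<A> \<sigma> n g i)) < 1 / real n * real (2 * g choose g)}"
  define bad_T where "bad_T = {\<sigma>. \<sigma> permutes {1..n} \<and> \<sigma> ` {1..i} \<in> \<A> \<and>
    real (card (core d (completions \<A> \<sigma> n h i))) < 1 / real n * real (2 * h choose h)}"
  have "real (card bad_S) \<le> 1 / real n * fact n"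
    unfolding bad_S_def
    by (rule card_chain_in_le[where \<Phi> = "\<lambda>\<F>. real (card \<F>) < 1 / real n * real (2 * g choose g)"])
      (use gh hn i in auto)
  moreover have "real (card bad_T) \<le> (1 / real n + (2 * d + real h) / real h ^ 2) * fact n"
    unfolding bad_T_def
  proof (rule card_chain_in_le[where \<Phi> = "\<lambda>\<D>. real (card (core d \<D>)) < 1 / real n * real (2 * h choose h)"])
    show "2 * h \<le> n" "h \<le> i" "i \<le> n - h" "0 \<le> 1 / real n + (2 * d + real h) / real h ^ 2"
      using hn i d0 by auto
    fix \<sigma> assume \<sigma>: "\<sigma> permutes {1..n}"
      and small_core: "real (card (core d (completions \<A> \<sigma> n h i))) < 1 / real n * real (2 * h choose h)"
    have cT: "card (\<sigma> ` outer_block n h) = 2 * h"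
      using card_outer_block[OF hn] permutes_inj[OF \<sigma>] by (simp add: card_image inj_on_subset)
    have "real (card (\<sigma> ` outer_block n h) choose (h - 1)) \<le> real (2 * h choose h)"
      using cT binomial_maximum'[of h "h - 1"] by simp
    then have "real (card (\<sigma> ` outer_block n h) choose (h - 1)) * (2 * d + real h) / real h ^ 2
        \<le> real (2 * h choose h) * (2 * d + real h) / real h ^ 2"
      using d0 by (intro divide_right_mono mult_right_mono) auto
    then have "real (card (completions \<A> \<sigma> n h i)) \<le> real (card (core d (completions \<A> \<sigma> n h i)))
       + real (2 * h choose h) * (2 * d + real h) / real h ^ 2"
      using card_le_card_core[OF _ h1 d0, of "\<sigma> ` outer_block n h" "completions \<A> \<sigma> n h i"]
      by (force simp: completions_def)
    then show "real (card (completions \<A> \<sigma> n h i)) \<le> (1 / real n + (2 * d + real h) / real h ^ 2) * real (2 * h choose h)"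
      using small_core by (simp add: algebra_simps)
  qed
  moreover have "card {\<sigma>. \<sigma> permutes {1..n} \<and> \<sigma> ` {1..i} \<in> \<A>}
      \<le> card {\<sigma>. \<sigma> permutes {1..n} \<and> good_level \<A> n g h d \<sigma> i} + card bad_S + card bad_T"
  proof -
    have "{\<sigma>. \<sigma> permutes {1..n} \<and> \<sigma> ` {1..i} \<in> \<A>}
        \<subseteq> {\<sigma>. \<sigma> permutes {1..n} \<and> good_level \<A> n g h d \<sigma> i} \<union> bad_S \<union> bad_T"
      unfolding bad_S_def bad_T_def good_level_def by auto
    moreover have "finite bad_S" "finite bad_T"
      unfolding bad_S_def bad_T_def by (auto intro: finite_subset[OF _ finite_permutations[of "{1..n}"]])
    moreover have "finite {\<sigma>. \<sigma> permutes {1..n} \<and> good_level \<A> n g h d \<sigma> i}"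
      by (auto intro: finite_subset[OF _ finite_permutations[of "{1..n}"]])
    ultimately show ?thesis
      using card_Un_le[of "{\<sigma>. \<sigma> permutes {1..n} \<and> good_level \<A> n g h d \<sigma> i} \<union> bad_S" bad_T]
        card_Un_le[of "{\<sigma>. \<sigma> permutes {1..n} \<and> good_level \<A> n g h d \<sigma> i}" bad_S]
      by (meson add_right_mono card_mono finite_UnI order_trans)
  qed
  moreover have "2 / real n = 1 / real n + 1 / real n" by simp
  ultimately show ?thesis by (simp only: distrib_right)
qed

lemma sum_binomial_le_two_power: "(\<Sum>i\<in>W. real (n choose i)) \<le> 2 ^ n" if "W \<subseteq> {..n}"
proof -
  have "(\<Sum>i\<in>W. real (n choose i)) \<le> (\<Sum>i\<le>n. real (n choose i))"
    using that by (intro sum_mono2) auto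
  also have "\<dots> = real (\<Sum>i\<le>n. n choose i)" by simp
  also have "\<dots> = 2 ^ n" by (simp add: choose_row_sum)
  finally show ?thesis .
qed

text \<open>Averaging over \<open>\<sigma>\<close>, with layer \<open>i\<close> weighted by \<open>n choose i\<close> so that the weighted count of
  permutations whose chain meets \<open>\<A>\<close> at level \<open>i\<close> is \<open>n! |\<A> \<inter> [n]\<^bsup>(i)\<^esup>|\<close>.\<close>
lemma exists_permutes_good_levels:
  assumes gh: "g \<le> h" and h1: "1 \<le> h" and hn: "2 * h \<le> n" and d0: "d \<ge> 0"
    and A: "\<A> \<subseteq> Pow {1..n}"
  defines "c \<equiv> 2 / real n + (2 * d + real h) / real h ^ 2"
  shows "\<exists>\<sigma>. \<sigma> permutes {1..n} \<and>
     (\<Sum>i\<in>{i\<in>{h..n-h}. good_level \<A> n g h d \<sigma> i}. real (n choose i))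
       \<ge> (\<Sum>i\<in>{h..n-h}. real (card {X\<in>\<A>. card X = i})) - c * 2 ^ n"
proof (rule ccontr)
  let ?G = "{\<sigma>. \<sigma> permutes {1..n}}"
  let ?W = "{h..n-h}"
  let ?a = "\<lambda>i. real (card {X\<in>\<A>. card X = i})"
  let ?good = "\<lambda>\<sigma>. (\<Sum>i\<in>{i\<in>?W. good_level \<A> n g h d \<sigma> i}. real (n choose i))"
  have finG: "finite ?G" by (simp add: finite_permutations)
  have cardG: "card ?G = fact n" using card_permutations[of "{1..n}" n] by simp
  assume "\<not> ?thesis"
  then have "?good \<sigma> < (\<Sum>i\<in>?W. ?a i) - c * 2 ^ n" if "\<sigma> \<in> ?G" for \<sigma>
    using that by auto
  then have "(\<Sum>\<sigma>\<in>?G. ?good \<sigma>) < real (card ?G) * ((\<Sum>i\<in>?W. ?a i) - c * 2 ^ n)"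
    using cardG by (intro sum_bounded_above_strict) auto
  moreover have "real (card ?G) * ((\<Sum>i\<in>?W. ?a i) - c * 2 ^ n) \<le> (\<Sum>\<sigma>\<in>?G. ?good \<sigma>)"
  proof -
    have c0: "c \<ge> 0" using d0 by (simp add: c_def)
    have "c * (\<Sum>i\<in>?W. real (n choose i)) \<le> c * 2 ^ n"
      using sum_binomial_le_two_power[of ?W n] c0 by (intro mult_left_mono) auto
    then have "real (card ?G) * ((\<Sum>i\<in>?W. ?a i) - c * 2 ^ n)
        \<le> fact n * ((\<Sum>i\<in>?W. ?a i) - c * (\<Sum>i\<in>?W. real (n choose i)))"
      unfolding cardG of_nat_fact by (intro mult_left_mono) auto
    also have "\<dots> = (\<Sum>i\<in>?W. ?a i * fact n - real (n choose i) * c * fact n)"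
      by (simp only: sum_subtractf sum_distrib_right sum_distrib_left right_diff_distrib mult_ac)
    also have "\<dots> = (\<Sum>i\<in>?W. real (n choose i) * (real (card {\<sigma>\<in>?G. \<sigma> ` {1..i} \<in> \<A>}) - c * fact n))"
    proof (rule sum.cong[OF refl])
      fix i assume "i \<in> ?W"
      then have "i \<le> n" by auto
      from card_permutes_chain_in[OF A this]
      show "?a i * fact n - real (n choose i) * c * fact n
          = real (n choose i) * (real (card {\<sigma>\<in>?G. \<sigma> ` {1..i} \<in> \<A>}) - c * fact n)"
        by (simp add: algebra_simps)
    qed
    also have "\<dots> \<le> (\<Sum>i\<in>?W. real (n choose i) * real (card {\<sigma>\<in>?G. good_level \<A> n g h d \<sigma> i}))"
    proof (rule sum_mono)
      fix i assume "i \<in> ?W"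
      then have "real (card {\<sigma>\<in>?G. \<sigma> ` {1..i} \<in> \<A>}) - c * fact n
          \<le> real (card {\<sigma>\<in>?G. good_level \<A> n g h d \<sigma> i})"
        using card_chain_in_le_good_level[OF gh h1 hn d0, of i \<A>] unfolding c_def by auto
      then show "real (n choose i) * (real (card {\<sigma>\<in>?G. \<sigma> ` {1..i} \<in> \<A>}) - c * fact n)
          \<le> real (n choose i) * real (card {\<sigma>\<in>?G. good_level \<A> n g h d \<sigma> i})"
        by (intro mult_left_mono) auto
    qed
    also have "\<dots> = (\<Sum>i\<in>?W. \<Sum>\<sigma>\<in>?G. if good_level \<A> n g h d \<sigma> i then real (n choose i) else 0)"
      using finG by (simp add: sum.If_cases Int_def mult.commute)
    also have "\<dots> = (\<Sum>\<sigma>\<in>?G. ?good \<sigma>)"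
      by (subst sum.swap) (intro sum.cong refl sum.inter_filter[symmetric] finite_atLeastAtMost)
    finally show ?thesis .
  qed
  ultimately show False by linarith
qed

section \<open>The outer layers\<close>

lemma finite_below_half: "e \<ge> 0 \<Longrightarrow> finite {i::nat. real i \<le> real n / 2 - e}"
proof (rule finite_subset[of _ "{..n}"])
  show "{i::nat. real i \<le> real n / 2 - e} \<subseteq> {..n}" if "e \<ge> 0"
  proof
    fix x assume "x \<in> {i::nat. real i \<le> real n / 2 - e}"
    then have "real x \<le> real n" using that by simp
    then show "x \<in> {..n}" by simp
  qed
qed auto

lemma sum_binomial_below_half_le:
  assumes n: "n > 0" and e: "e \<ge> 0"
  shows "(\<Sum>i\<in>{i. real i \<le> real n / 2 - e}. real (n choose i)) \<le> 2 ^ n * exp (-2 * e\<^sup>2 / n)"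
proof -
  interpret binomial_distribution n "1/2" by unfold_locales auto
  let ?L = "{i::nat. real i \<le> real n / 2 - e}"
  have pmf: "pmf (binomial_pmf n (1/2)) i = real (n choose i) / 2 ^ n" for i
  proof (cases "i \<le> n")
    case True
    have "(1/2::real) ^ i * (1 - 1/2) ^ (n - i) = (1/2) ^ (i + (n - i))" by (simp add: power_add)
    then show ?thesis using True by (simp add: power_divide)
  next
    case False then show ?thesis by (simp add: binomial_eq_0)
  qed
  have "measure_pmf.prob (binomial_pmf n (1/2)) {x. real x \<le> real n * (1/2) - e}
      = (\<Sum>i\<in>?L. pmf (binomial_pmf n (1/2)) i)"
    using finite_below_half[OF e] by (subst measure_measure_pmf_finite) auto
  also have "\<dots> = (\<Sum>i\<in>?L. real (n choose i)) / 2 ^ n"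
    by (simp only: pmf sum_divide_distrib)
  finally show ?thesis using prob_le[OF n e] by (simp add: divide_le_eq mult.commute)
qed

lemma card_eq_sum_card_layers:
  assumes A: "\<A> \<subseteq> Pow {1..n}"
  shows "real (card \<A>) = (\<Sum>i\<in>{0..n}. real (card {X\<in>\<A>. card X = i}))"
proof -
  have finA: "finite \<A>" using A by (metis finite_Pow_iff finite_atLeastAtMost finite_subset)
  have "card X \<le> n" if "X \<in> \<A>" for X
    using A that card_mono[of "{1..n}" X] by auto
  then have "\<A> = (\<Union>i\<in>{0..n}. {X\<in>\<A>. card X = i})" by auto
  then have "card \<A> = card (\<Union>i\<in>{0..n}. {X\<in>\<A>. card X = i})" by simp
  also have "\<dots> = (\<Sum>i\<in>{0..n}. card {X\<in>\<A>. card X = i})"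
    by (rule card_UN_disjoint) (use finA in auto)
  finally show ?thesis by simp
qed

lemma card_layer_le_binomial:
  assumes "\<A> \<subseteq> Pow {1..n}"
  shows "real (card {X\<in>\<A>. card X = i}) \<le> real (n choose i)"
proof -
  have "card {X\<in>\<A>. card X = i} \<le> card {X. X \<subseteq> {1..n} \<and> card X = i}"
    using assms by (intro card_mono) auto
  also have "\<dots> = n choose i" using n_subsets[of "{1..n}" i] by simp
  finally show ?thesis by simp
qed

lemma sum_card_middle_layers_ge:
  assumes A: "\<A> \<subseteq> Pow {1..n}" and n: "n \<ge> 1" and e: "e \<ge> 0" and h: "real h \<le> real n / 2 - e"
  shows "(\<Sum>i\<in>{h..n-h}. real (card {X\<in>\<A>. card X = i})) \<ge> real (card \<A>) - 2 * 2 ^ n * exp (-2 * e\<^sup>2 / n)"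
proof -
  let ?a = "\<lambda>i. real (card {X\<in>\<A>. card X = i})"
  let ?b = "\<lambda>i. real (n choose i)"
  have hn: "2 * h \<le> n" using h e by linarith
  have "(\<Sum>i\<in>{0..n}-{h..n-h}. ?a i) \<le> (\<Sum>i\<in>{0..n}-{h..n-h}. ?b i)"
    by (rule sum_mono) (rule card_layer_le_binomial[OF A])
  also have "\<dots> \<le> (\<Sum>i\<in>{..<h} \<union> {n-h<..n}. ?b i)"
    by (rule sum_mono2) auto
  also have "\<dots> = (\<Sum>i\<in>{..<h}. ?b i) + (\<Sum>i\<in>{n-h<..n}. ?b i)"
    by (rule sum.union_disjoint) (use hn in auto)
  also have "(\<Sum>i\<in>{n-h<..n}. ?b i) = (\<Sum>i\<in>{..<h}. ?b i)"
  proof (rule sum.reindex_bij_witness[of _ "\<lambda>j. n - j" "\<lambda>i. n - i"])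
    fix i assume "i \<in> {n-h<..n}"
    then show "n - (n - i) = i" "n - i \<in> {..<h}" "?b (n - i) = ?b i"
      using hn by (auto simp: binomial_symmetric[of i n, symmetric])
  qed (use hn in auto)
  also have "(\<Sum>i\<in>{..<h}. ?b i) \<le> (\<Sum>i\<in>{i. real i \<le> real n / 2 - e}. ?b i)"
    using finite_below_half[OF e] h by (intro sum_mono2) auto
  also have "\<dots> \<le> 2 ^ n * exp (-2 * e\<^sup>2 / n)" using sum_binomial_below_half_le[of n e] n e by simp
  finally have "(\<Sum>i\<in>{0..n}-{h..n-h}. ?a i) \<le> 2 * 2 ^ n * exp (-2 * e\<^sup>2 / n)" by simp
  moreover have "(\<Sum>i\<in>{0..n}. ?a i) = (\<Sum>i\<in>{h..n-h}. ?a i) + (\<Sum>i\<in>{0..n}-{h..n-h}. ?a i)"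
    by (simp add: sum.subset_diff[of "{h..n-h}" "{0..n}"])
  ultimately show ?thesis using card_eq_sum_card_layers[OF A] by simp
qed

lemma error_terms_le:
  fixes h :: real
  assumes n: "n \<ge> 1" and h: "h \<ge> real n / 4"
  shows "2 / real n ^ 2 + 2 / real n + (2 * real n powr (4/3) + h) / h ^ 2 \<le> 2 ^ 10 / real n powr (2/3)"
proof -
  define p where "p = real n powr (2/3)"
  define N where "N = real n"
  have N1: "N \<ge> 1" using n by (simp add: N_def)
  have h0: "h > 0" using h N1 unfolding N_def by linarith
  have p0: "p > 0" unfolding p_def using n by simp
  have pN: "p \<le> N" unfolding p_def N_def using n powr_mono[of "2/3" 1 "real n"] by simp
  have "real n powr (4/3) * p = real n powr (4/3 + 2/3)" unfolding p_def by (rule powr_add[symmetric])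
  then have dp: "real n powr (4/3) * p = N ^ 2" unfolding N_def using n by (simp add: powr_numeral)
  have "(N / 4) ^ 2 \<le> h ^ 2" using h N1 unfolding N_def by (intro power_mono) auto
  then have hh: "h ^ 2 \<ge> N ^ 2 / 16" by (simp add: power_divide)
  have "2 * real n powr (4/3) / h ^ 2 \<le> 2 * real n powr (4/3) / (N ^ 2 / 16)"
    using hh N1 h0 by (intro divide_left_mono) auto
  also have "\<dots> = 32 * (real n powr (4/3) * p) / (N ^ 2 * p)" using p0 N1 by (simp add: field_simps)
  finally have t1: "2 * real n powr (4/3) / h ^ 2 \<le> 32 / p" using dp N1 p0 by simp
  have "h / h ^ 2 = 1 / h" using h0 by (simp add: power2_eq_square)
  also have "\<dots> \<le> 4 / N" using h h0 N1 unfolding N_def by (simp add: field_simps)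
  also have "\<dots> \<le> 4 / p" using pN p0 by (intro divide_left_mono) auto
  finally have t2: "h / h ^ 2 \<le> 4 / p" .
  have t3: "2 / N \<le> 2 / p" using pN p0 by (intro divide_left_mono) auto
  have "N \<le> N ^ 2" using N1 by (simp add: power2_eq_square)
  then have t4: "2 / N ^ 2 \<le> 2 / p" using pN p0 by (intro divide_left_mono) auto
  have "2 / N ^ 2 + 2 / N + (2 * real n powr (4/3) + h) / h ^ 2 \<le> 40 / p"
    using t1 t2 t3 t4 by (simp add: add_divide_distrib)
  also have "\<dots> \<le> 2 ^ 10 / p" using p0 by (intro divide_right_mono) auto
  finally show ?thesis unfolding N_def p_def .
qed

lemma exp_sqrt_ln_square:
  assumes "n \<ge> 1"
  shows "exp (-2 * (sqrt (real n * ln (real n)))\<^sup>2 / n) = 1 / real n ^ 2"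
proof -
  have n: "real n > 0" using assms by simp
  have "(sqrt (real n * ln (real n)))\<^sup>2 = real n * ln (real n)" using assms by simp
  then have "-2 * (sqrt (real n * ln (real n)))\<^sup>2 / n = - (ln (real n) + ln (real n))" using n by simp
  then have "exp (-2 * (sqrt (real n * ln (real n)))\<^sup>2 / n) = inverse (exp (ln (real n) + ln (real n)))"
    by (simp only: exp_minus)
  also have "\<dots> = inverse (real n * real n)" by (simp only: exp_add exp_ln[OF n])
  finally show ?thesis by (simp add: power2_eq_square divide_inverse)
qed

lemma eventually_large_parameters:
  "eventually (\<lambda>n::nat. 2 * sqrt (real n * ln (real n)) + 2 \<le> real n / 2 \<and> 2 * real n powr (3/5) \<le> real n / 4) at_top"
  by (intro eventually_conj) real_asymp+

lemma even_s_par: "2 * (s_par n div 2) = s_par n"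
  by (simp add: s_par_def)

lemma even_t_par: "2 * (t_par n div 2) = t_par n"
  by (simp add: t_par_def)

lemma parameter_bounds:
  fixes n :: nat
  assumes large: "2 * sqrt (real n * ln (real n)) + 2 \<le> real n / 2"
    and s_small: "2 * real n powr (3/5) \<le> real n / 4"
  defines "h \<equiv> t_par n div 2"
  shows "n \<ge> 1" and "s_par n div 2 \<le> h" and "2 * h \<le> n" and "real n / 4 \<le> real h"
    and "real h \<le> real n / 2 - sqrt (real n * ln (real n))"
proof -
  define x where "x = (real n - 2 * sqrt (real n * ln (real n))) / 2"
  have "real n * ln (real n) \<ge> 0" by (cases "n = 0") auto
  then have sq0: "sqrt (real n * ln (real n)) \<ge> 0" by simp
  then show n1: "n \<ge> 1" using large by (cases n) auto
  have x: "x = real n / 2 - sqrt (real n * ln (real n))" "x \<ge> real n / 4 + 1"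
    using large unfolding x_def by (auto simp: field_simps)
  have h: "real h = real_of_int \<lfloor>x\<rfloor>" unfolding h_def t_par_def x_def using x by simp
  show lower: "real n / 4 \<le> real h" using h x by linarith
  show upper: "real h \<le> real n / 2 - sqrt (real n * ln (real n))" using h x by linarith
  then show "2 * h \<le> n" using sq0 by linarith
  have "real (s_par n div 2) \<le> 2 * real n powr (3/5)" unfolding s_par_def by simp
  then show "s_par n div 2 \<le> h" using s_small lower by linarith
qed

lemma exists_permutes_good_mass:
  assumes A: "\<A> \<subseteq> Pow {1..n}" and n: "n \<ge> 1" and gh: "g \<le> h" and hn: "2 * h \<le> n"
    and h_lower: "real n / 4 \<le> real h" and h_upper: "real h \<le> real n / 2 - sqrt (real n * ln (real n))"
  shows "\<exists>\<sigma>. \<sigma> permutes {1..n} \<and>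
    (\<Sum>i\<in>{i\<in>{h..n-h}. good_level \<A> n g h (real n powr (4/3)) \<sigma> i}. real (n choose i))
      \<ge> real (card \<A>) - 2 ^ 10 / real n powr (2/3) * 2 ^ n"
proof -
  let ?d = "real n powr (4/3)"
  have h1: "1 \<le> h" using h_lower n by linarith
  obtain \<sigma> where \<sigma>: "\<sigma> permutes {1..n}"
    and good: "(\<Sum>i\<in>{i\<in>{h..n-h}. good_level \<A> n g h ?d \<sigma> i}. real (n choose i))
       \<ge> (\<Sum>i\<in>{h..n-h}. real (card {X\<in>\<A>. card X = i})) - (2 / real n + (2 * ?d + real h) / real h ^ 2) * 2 ^ n"
    using exists_permutes_good_levels[OF gh h1 hn _ A, of ?d] by auto
  have "(\<Sum>i\<in>{h..n-h}. real (card {X\<in>\<A>. card X = i}))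
      \<ge> real (card \<A>) - 2 * 2 ^ n * exp (-2 * (sqrt (real n * ln (real n)))\<^sup>2 / n)"
    by (rule sum_card_middle_layers_ge[OF A n _ h_upper]) (use n in simp)
  then have "(\<Sum>i\<in>{h..n-h}. real (card {X\<in>\<A>. card X = i})) \<ge> real (card \<A>) - 2 / real n ^ 2 * 2 ^ n"
    unfolding exp_sqrt_ln_square[OF n] by simp
  moreover have "(2 / real n ^ 2 + 2 / real n + (2 * ?d + real h) / real h ^ 2) * 2 ^ n
      \<le> 2 ^ 10 / real n powr (2/3) * 2 ^ n"
    using error_terms_le[OF n h_lower] by (intro mult_right_mono) auto
  ultimately show ?thesis using \<sigma> good by (intro exI[of _ \<sigma>]) (auto simp: algebra_simps)
qed

lemma max_chain_permutes:
  assumes \<sigma>: "\<sigma> permutes {1..n}"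
  shows "max_chain n (\<lambda>i. \<sigma> ` {1..i})"
  unfolding max_chain_def
proof (intro conjI allI impI)
  fix i assume "i \<le> n"
  then show "\<sigma> ` {1..i} \<subseteq> {1..n}" using permutes_image[OF \<sigma>] by auto
  show "card (\<sigma> ` {1..i}) = i" using permutes_inj[OF \<sigma>] by (simp add: card_image inj_on_subset)
next
  fix i show "\<sigma> ` {1..i} \<subseteq> \<sigma> ` {1..Suc i}" by (intro image_mono) auto
qed

lemma chain_block_witness:
  assumes \<sigma>: "\<sigma> permutes {1..n}"
    and I: "\<forall>i\<in>I. k \<le> i \<and> i \<le> n - k \<and> \<F> i \<subseteq> completions \<A> \<sigma> n k i \<and> P (\<F> i) \<and> Q (\<F> i)"
  shows "\<exists>F0. F0 \<subseteq> \<sigma> ` outer_block n k \<and> card F0 = k \<and>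
      (\<forall>i\<in>I. \<sigma> ` {1..i} \<inter> \<sigma> ` outer_block n k = F0 \<and> k \<le> i) \<and>
      (\<forall>i\<in>I. \<exists>\<F>'. \<F>' \<subseteq> {F. F \<subseteq> \<sigma> ` outer_block n k \<and> card F = k} \<and> P \<F>' \<and>
         (\<forall>F\<in>\<F>'. (\<sigma> ` {1..i} - F0) \<union> F \<in> \<A>) \<and> Q \<F>')"
proof (intro exI[of _ "\<sigma> ` {1..k}"] conjI ballI)
  have inj: "inj \<sigma>" using permutes_inj[OF \<sigma>] .
  show "\<sigma> ` {1..k} \<subseteq> \<sigma> ` outer_block n k" unfolding outer_block_def by blast
  show "card (\<sigma> ` {1..k}) = k" using inj by (simp add: card_image inj_on_subset)
  fix i assume i: "i \<in> I"
  then have ki: "k \<le> i" "i \<le> n - k" using I by auto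
  show "\<sigma> ` {1..i} \<inter> \<sigma> ` outer_block n k = \<sigma> ` {1..k}"
    using image_Int[OF inj, of "{1..i}" "outer_block n k"] Int_outer_block[OF ki] by simp
  show "k \<le> i" using ki(1) .
  have "{1..i} - {1..k} = {Suc k..i}" using ki(1) by auto
  then have diff: "\<sigma> ` {1..i} - \<sigma> ` {1..k} = \<sigma> ` {Suc k..i}"
    using image_set_diff[OF inj, of "{1..i}" "{1..k}"] by simp
  have \<F>: "\<F> i \<subseteq> completions \<A> \<sigma> n k i" "P (\<F> i)" "Q (\<F> i)" using I i by auto
  show "\<exists>\<F>'. \<F>' \<subseteq> {F. F \<subseteq> \<sigma> ` outer_block n k \<and> card F = k} \<and> P \<F>' \<and>
         (\<forall>F\<in>\<F>'. (\<sigma> ` {1..i} - \<sigma> ` {1..k}) \<union> F \<in> \<A>) \<and> Q \<F>'"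
  proof (intro exI[of _ "\<F> i"] conjI ballI)
    show "\<F> i \<subseteq> {F. F \<subseteq> \<sigma> ` outer_block n k \<and> card F = k}"
      using \<F>(1) unfolding completions_def by blast
    show "(\<sigma> ` {1..i} - \<sigma> ` {1..k}) \<union> F \<in> \<A>" if "F \<in> \<F> i" for F
      using \<F>(1) that unfolding diff completions_def by blast
  qed (rule \<F>(2,3))+
qed

lemma permuted_outer_blocks:
  assumes \<sigma>: "\<sigma> permutes {1..n}" and gh: "g \<le> h" and hn: "2 * h \<le> n"
  shows "\<sigma> ` outer_block n g \<subseteq> \<sigma> ` outer_block n h" and "\<sigma> ` outer_block n h \<subseteq> {1..n}"
    and "card (\<sigma> ` outer_block n g) = 2 * g" and "card (\<sigma> ` outer_block n h) = 2 * h"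
proof -
  have inj: "inj \<sigma>" using permutes_inj[OF \<sigma>] .
  show "\<sigma> ` outer_block n g \<subseteq> \<sigma> ` outer_block n h"
    using outer_block_mono[OF gh] hn by (intro image_mono) auto
  have "\<sigma> ` outer_block n h \<subseteq> \<sigma> ` {1..n}"
    using outer_block_subset[of h n] hn by (intro image_mono) simp
  then show "\<sigma> ` outer_block n h \<subseteq> {1..n}" using permutes_image[OF \<sigma>] by simp
  show "card (\<sigma> ` outer_block n g) = 2 * g" "card (\<sigma> ` outer_block n h) = 2 * h"
    using card_outer_block[of g n] card_outer_block[of h n] gh hn inj
    by (simp_all add: card_image inj_on_subset)
qed

lemma good_levels_outer_witness:
  assumes \<sigma>: "\<sigma> permutes {1..n}" and gh: "g \<le> h"
    and I: "\<forall>i\<in>I. h \<le> i \<and> i \<le> n - h \<and> good_level \<A> n g h d \<sigma> i"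
  shows "\<exists>F0. F0 \<subseteq> \<sigma> ` outer_block n g \<and> card F0 = g \<and>
      (\<forall>i\<in>I. \<sigma> ` {1..i} \<inter> \<sigma> ` outer_block n g = F0 \<and> g \<le> i) \<and>
      (\<forall>i\<in>I. \<exists>\<F>. \<F> \<subseteq> {F. F \<subseteq> \<sigma> ` outer_block n g \<and> card F = g} \<and>
         1 / real n * real (2 * g choose g) \<le> real (card \<F>) \<and>
         (\<forall>F\<in>\<F>. (\<sigma> ` {1..i} - F0) \<union> F \<in> \<A>))"
  using I gh unfolding good_level_def
  by (intro chain_block_witness[OF \<sigma>, where \<F> = "completions \<A> \<sigma> n g"
        and P = "\<lambda>\<F>. 1 / real n * real (2 * g choose g) \<le> real (card \<F>)"
        and Q = "\<lambda>_. True", unfolded simp_thms]) auto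

lemma good_levels_inner_witness:
  assumes \<sigma>: "\<sigma> permutes {1..n}"
    and I: "\<forall>i\<in>I. h \<le> i \<and> i \<le> n - h \<and> good_level \<A> n g h d \<sigma> i"
  shows "\<exists>D0. D0 \<subseteq> \<sigma> ` outer_block n h \<and> card D0 = h \<and>
      (\<forall>i\<in>I. \<sigma> ` {1..i} \<inter> \<sigma> ` outer_block n h = D0 \<and> h \<le> i) \<and>
      (\<forall>i\<in>I. \<exists>\<D>. \<D> \<subseteq> {D. D \<subseteq> \<sigma> ` outer_block n h \<and> card D = h} \<and>
         1 / real n * real (2 * h choose h) \<le> real (card \<D>) \<and>
         (\<forall>D\<in>\<D>. (\<sigma> ` {1..i} - D0) \<union> D \<in> \<A>) \<and>
         (\<forall>D\<in>\<D>. d \<le> real (card {D'\<in>\<D>. neighbours D D'})))"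
  using I core_subset[THEN subsetD] core_min_degree[OF finite_completions] unfolding good_level_def
  by (intro chain_block_witness[OF \<sigma>, where \<F> = "\<lambda>i. core d (completions \<A> \<sigma> n h i)"
        and P = "\<lambda>\<D>. 1 / real n * real (2 * h choose h) \<le> real (card \<D>)"
        and Q = "\<lambda>\<D>. \<forall>D\<in>\<D>. d \<le> real (card {D'\<in>\<D>. neighbours D D'})"]) auto

theorem lemma2:
  "\<exists>N0::nat. \<forall>n\<ge>N0. \<forall>\<A>. \<A> \<subseteq> Pow {1..n} \<longrightarrow>
    (let s = s_par n; t = t_par n in
     \<exists>S T C I.
       S \<subseteq> T \<and> T \<subseteq> {1..n} \<and> card S = s \<and> card T = t \<and>
       max_chain n C \<and> I \<subseteq> {0..n} \<and>
       (\<forall>i\<in>I. C i \<in> \<A>) \<and>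
       (\<Sum>i\<in>I. real (n choose i)) \<ge> real (card \<A>) - 2^10 / real n powr (2/3) * 2^n \<and>
       (\<exists>F0. F0 \<subseteq> S \<and> card F0 = s div 2 \<and>
          (\<forall>i\<in>I. C i \<inter> S = F0 \<and> i \<ge> s div 2) \<and>
          (\<forall>i\<in>I. \<exists>\<F>. \<F> \<subseteq> {F. F \<subseteq> S \<and> card F = s div 2} \<and>
                real (card \<F>) \<ge> 1 / real n * real (s choose (s div 2)) \<and>
                (\<forall>F\<in>\<F>. (C i - F0) \<union> F \<in> \<A>))) \<and>
       (\<exists>D0. D0 \<subseteq> T \<and> card D0 = t div 2 \<and>
          (\<forall>i\<in>I. C i \<inter> T = D0 \<and> i \<ge> t div 2) \<and>
          (\<forall>i\<in>I. \<exists>\<D>. \<D> \<subseteq> {D. D \<subseteq> T \<and> card D = t div 2} \<and>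
                real (card \<D>) \<ge> 1 / real n * real (t choose (t div 2)) \<and>
                (\<forall>D\<in>\<D>. (C i - D0) \<union> D \<in> \<A>) \<and>
                (\<forall>D\<in>\<D>. real (card {D'\<in>\<D>. neighbours D D'}) \<ge> real n powr (4/3)))))"
proof -
  obtain N0 where N0: "\<And>n. n \<ge> N0 \<Longrightarrow> 2 * sqrt (real n * ln (real n)) + 2 \<le> real n / 2 \<and>
      2 * real n powr (3/5) \<le> real n / 4"
    using eventually_large_parameters unfolding eventually_at_top_linorder by blast
  show ?thesis
    apply (intro exI[of _ N0] allI impI)
    subgoal for n \<A>
    proof -
      assume "n \<ge> N0" and A: "\<A> \<subseteq> Pow {1..n}"
      define g h where "g = s_par n div 2" and "h = t_par n div 2"
      note par = parameter_bounds[OF N0[OF \<open>n \<ge> N0\<close>, THEN conjunct1] N0[OF \<open>n \<ge> N0\<close>, THEN conjunct2],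
          folded g_def h_def]
      obtain \<sigma> where \<sigma>: "\<sigma> permutes {1..n}"
        and mass: "(\<Sum>i\<in>{i\<in>{h..n-h}. good_level \<A> n g h (real n powr (4/3)) \<sigma> i}. real (n choose i))
          \<ge> real (card \<A>) - 2 ^ 10 / real n powr (2/3) * 2 ^ n"
        using exists_permutes_good_mass[OF A par] by blast
      define I where "I = {i\<in>{h..n-h}. good_level \<A> n g h (real n powr (4/3)) \<sigma> i}"
      have I: "\<forall>i\<in>I. h \<le> i \<and> i \<le> n - h \<and> good_level \<A> n g h (real n powr (4/3)) \<sigma> i"
        by (auto simp: I_def)
      have "\<forall>i\<in>I. \<sigma> ` {1..i} \<in> \<A>" "I \<subseteq> {0..n}" using I by (auto simp: good_level_def)
      then show ?thesis
        unfolding Let_def g_def[symmetric] h_def[symmetric]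
        using permuted_outer_blocks[OF \<sigma> par(2,3)] max_chain_permutes[OF \<sigma>] mass[folded I_def]
          good_levels_outer_witness[OF \<sigma> par(2) I] good_levels_inner_witness[OF \<sigma> I]
        unfolding even_s_par[of n, folded g_def] even_t_par[of n, folded h_def]
        by - (rule exI[of _ "\<sigma> ` outer_block n g"], rule exI[of _ "\<sigma> ` outer_block n h"],
            rule exI[of _ "\<lambda>i. \<sigma> ` {1..i}"], rule exI[of _ I], intro conjI, assumption+)
    qed
    done
qed

end
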